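(* Let $\mathbb{F}$ be a field of characteristic $0$, let $V\subseteq\{0,1\}^n\subseteq\mathbb{F}^n$, and let $\prec_{\mathrm{lex}}$ be the lexicographic order on monomials of $\mathbb{F}[x_1,\dots,x_n]$ induced by $x_1\succ\dots\succ x_n$. Then for every monomial $m=x^{\alpha}$, $R^{\prec_{\mathrm{lex}}}_{I(V)}(m)\in\mathbb{Z}[x_1,\dots,x_n]$.
   Context: $I(V)$ is the ideal of all polynomials in $\mathbb{F}[x_1,\dots,x_n]$ vanishing on every point of $V$ (the whole ring if $V=\emptyset$). In the lexicographic order, $x^{\alpha}\succ x^{\beta}$ iff the first nonzero entry of $\alpha-\beta\in\mathbb{Z}^n$ is positive. A polynomial $p$ is reducible modulo an ideal $I$ if some $q\in I$ has the same leading ($\prec$-largest) monomial as $p$; every $p$ decomposes uniquely as $p=q+r$ with $q\in I$ and $r$ a linear combination of monomials irreducible modulo $I$, and $R^{\prec}_I(p):=r$. *)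

theory Defs
  imports Complex_Main "HOL-Library.Poly_Mapping"
begin

(* Multivariate polynomials over 'a: finitely supported maps from monomials
(exponent vectors nat \<Rightarrow>\<^sub>0 nat, variable x_(i+1) is index i) to coefficients. *)

type_synonym 'a mpoly = "(nat \<Rightarrow>\<^sub>0 nat) \<Rightarrow>\<^sub>0 'a"

definition mono_in :: "nat \<Rightarrow> (nat \<Rightarrow>\<^sub>0 nat) \<Rightarrow> bool" where
  "mono_in n \<alpha> \<longleftrightarrow> Poly_Mapping.keys \<alpha> \<subseteq> {..<n}"

definition polys :: "nat \<Rightarrow> ('a::zero) mpoly set" where
  "polys n = {p. \<forall>\<alpha>\<in>Poly_Mapping.keys p. mono_in n \<alpha>}"

definition eval_mpoly :: "('a::comm_ring_1) mpoly \<Rightarrow> (nat \<Rightarrow> 'a) \<Rightarrow> 'a" where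
  "eval_mpoly p x = (\<Sum>\<beta>\<in>Poly_Mapping.keys p. Poly_Mapping.lookup p \<beta> * (\<Prod>i\<in>Poly_Mapping.keys \<beta>. x i ^ Poly_Mapping.lookup \<beta> i))"

definition cube01 :: "nat \<Rightarrow> (nat \<Rightarrow> 'a::comm_ring_1) set" where
  "cube01 n = {x. \<forall>i. x i \<in> {0, 1} \<and> (n \<le> i \<longrightarrow> x i = 0)}"

definition vanishing_ideal :: "nat \<Rightarrow> (nat \<Rightarrow> 'a::comm_ring_1) set \<Rightarrow> 'a mpoly set" where
  "vanishing_ideal n V = {p \<in> polys n. \<forall>v\<in>V. eval_mpoly p v = 0}"

definition lex_less :: "(nat \<Rightarrow>\<^sub>0 nat) \<Rightarrow> (nat \<Rightarrow>\<^sub>0 nat) \<Rightarrow> bool" where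
  "lex_less \<beta> \<alpha> \<longleftrightarrow> (\<exists>i. Poly_Mapping.lookup \<beta> i < Poly_Mapping.lookup \<alpha> i \<and> (\<forall>j<i. Poly_Mapping.lookup \<beta> j = Poly_Mapping.lookup \<alpha> j))"

definition lead_mono :: "('a::zero) mpoly \<Rightarrow> (nat \<Rightarrow>\<^sub>0 nat)" where
  "lead_mono p = (THE \<alpha>. \<alpha> \<in> Poly_Mapping.keys p \<and> (\<forall>\<beta>\<in>Poly_Mapping.keys p. \<beta> \<noteq> \<alpha> \<longrightarrow> lex_less \<beta> \<alpha>))"

definition irreducible_mono :: "nat \<Rightarrow> ('a::zero) mpoly set \<Rightarrow> (nat \<Rightarrow>\<^sub>0 nat) \<Rightarrow> bool" where
  "irreducible_mono n I \<alpha> \<longleftrightarrow> mono_in n \<alpha> \<and> \<not> (\<exists>q\<in>I. q \<noteq> 0 \<and> lead_mono q = \<alpha>)"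

definition normal_form :: "nat \<Rightarrow> ('a::ab_group_add) mpoly set \<Rightarrow> 'a mpoly \<Rightarrow> 'a mpoly" where
  "normal_form n I p = (THE r. p - r \<in> I \<and> (\<forall>\<beta>\<in>Poly_Mapping.keys r. irreducible_mono n I \<beta>))"

end

theory Submission
  imports Defs
begin

text \<open>
  For \<open>V \<subseteq> {0,1}\<^sup>K\<close> we build, by induction on the finite set of variables \<open>K\<close>, a finite
  set \<open>S\<close> of monomials over \<open>K\<close> such that (i) the monomials of \<open>S\<close> are linearly independent
  as functions on \<open>V\<close>, (ii) every integer-valued function on \<open>V\<close> is an integer combination
  of them, and (iii) on \<open>V\<close> every monomial \<open>\<mu>\<close> agrees with an integer combination of
  monomials of \<open>S\<close> that are lex-below \<open>\<mu>\<close>. In the induction step the lex-largest variable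
  \<open>x\<^sub>k\<close> is split off: if \<open>V\<^sub>0\<close> and \<open>V\<^sub>1\<close> are the projections of the points of \<open>V\<close> with
  \<open>x\<^sub>k = 0\<close> and \<open>x\<^sub>k = 1\<close>, then \<open>S = x\<^sub>k S\<^sub>A \<union> S\<^sub>B\<close>, where \<open>S\<^sub>A\<close> is such a set for
  \<open>V\<^sub>0 \<inter> V\<^sub>1\<close> and \<open>S\<^sub>B\<close> one for \<open>V\<^sub>0 \<union> V\<^sub>1\<close>.

  By (i) and (iii) no nonzero polynomial vanishing on \<open>V\<close> has its leading monomial in \<open>S\<close>,
  so the combination given by (iii) for \<open>x\<^sup>\<alpha>\<close> is the normal form of \<open>x\<^sup>\<alpha>\<close>, and its
  coefficients are integers. Nothing beyond a commutative ring with \<open>1\<close> is needed.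
\<close>

text \<open>The library orders \<open>nat \<Rightarrow>\<^sub>0 nat\<close> lexicographically, so \<open>lex_less\<close> is just \<open><\<close>.\<close>

lemma lex_less_iff_less: "lex_less \<beta> \<alpha> \<longleftrightarrow> \<beta> < \<alpha>"
  by (simp add: lex_less_def less_poly_mapping.rep_eq less_fun_def)

lemma lead_mono_eq_Max:
  assumes "q \<noteq> 0"
  shows "lead_mono q = Max (Poly_Mapping.keys q)"
  unfolding lead_mono_def lex_less_iff_less
proof (rule the_equality)
  show "Max (Poly_Mapping.keys q) \<in> Poly_Mapping.keys q \<and>
      (\<forall>\<beta>\<in>Poly_Mapping.keys q. \<beta> \<noteq> Max (Poly_Mapping.keys q) \<longrightarrow> \<beta> < Max (Poly_Mapping.keys q))"
    using assms by (auto intro: Max_in le_neq_trans)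
next
  fix \<alpha> assume "\<alpha> \<in> Poly_Mapping.keys q \<and> (\<forall>\<beta>\<in>Poly_Mapping.keys q. \<beta> \<noteq> \<alpha> \<longrightarrow> \<beta> < \<alpha>)"
  then show "\<alpha> = Max (Poly_Mapping.keys q)"
    by (intro Max_eqI[symmetric]) (auto intro: less_imp_le)
qed

lemma lead_mono_in_keys: "q \<noteq> 0 \<Longrightarrow> lead_mono q \<in> Poly_Mapping.keys q"
  by (simp add: lead_mono_eq_Max)

lemma le_lead_mono: "\<beta> \<in> Poly_Mapping.keys q \<Longrightarrow> \<beta> \<le> lead_mono q"
  by (cases "q = 0") (simp_all add: lead_mono_eq_Max)

lemma less_poly_mappingI:
  fixes \<sigma> \<mu> :: "nat \<Rightarrow>\<^sub>0 nat"
  assumes "\<And>j. j < k \<Longrightarrow> Poly_Mapping.lookup \<sigma> j = Poly_Mapping.lookup \<mu> j"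
    and "Poly_Mapping.lookup \<sigma> k < Poly_Mapping.lookup \<mu> k"
  shows "\<sigma> < \<mu>"
  using assms by (auto simp: less_poly_mapping.rep_eq less_fun_def)

lemma single_le_single:
  fixes k a b :: nat
  shows "a \<le> b \<Longrightarrow> Poly_Mapping.single k a \<le> Poly_Mapping.single k b"
  by (cases "a = b") (auto simp: lookup_single intro!: less_imp_le less_poly_mappingI[where k=k])

definition eval_monom :: "(nat \<Rightarrow>\<^sub>0 nat) \<Rightarrow> (nat \<Rightarrow> 'a::comm_ring_1) \<Rightarrow> 'a" where
  "eval_monom \<sigma> v = (\<Prod>i\<in>Poly_Mapping.keys \<sigma>. v i ^ Poly_Mapping.lookup \<sigma> i)"

lemma eval_monom_eq_prod:
  assumes "finite F" "Poly_Mapping.keys \<sigma> \<subseteq> F"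
  shows "eval_monom \<sigma> v = (\<Prod>i\<in>F. v i ^ Poly_Mapping.lookup \<sigma> i)"
  unfolding eval_monom_def
  by (rule prod.mono_neutral_left[OF assms]) (simp add: in_keys_iff)

lemma eval_monom_zero [simp]: "eval_monom 0 v = 1"
  by (simp add: eval_monom_def)

lemma eval_monom_add: "eval_monom (\<sigma> + \<tau>) v = eval_monom \<sigma> v * eval_monom \<tau> v"
proof -
  let ?F = "Poly_Mapping.keys \<sigma> \<union> Poly_Mapping.keys \<tau>"
  have "eval_monom (\<sigma> + \<tau>) v = (\<Prod>i\<in>?F. v i ^ Poly_Mapping.lookup (\<sigma> + \<tau>) i)"
    using keys_add[of \<sigma> \<tau>] by (intro eval_monom_eq_prod) auto
  also have "\<dots> = (\<Prod>i\<in>?F. v i ^ Poly_Mapping.lookup \<sigma> i) * (\<Prod>i\<in>?F. v i ^ Poly_Mapping.lookup \<tau> i)"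
    by (simp add: lookup_add power_add prod.distrib)
  also have "\<dots> = eval_monom \<sigma> v * eval_monom \<tau> v"
    by (simp add: eval_monom_eq_prod[of ?F])
  finally show ?thesis .
qed

lemma eval_monom_single: "eval_monom (Poly_Mapping.single k e) v = v k ^ e"
  by (subst eval_monom_eq_prod[of "{k}"]) auto

lemma eval_monom_upd:
  "k \<notin> Poly_Mapping.keys \<sigma> \<Longrightarrow> eval_monom \<sigma> (v(k := x)) = eval_monom \<sigma> v"
  unfolding eval_monom_def by (intro prod.cong) auto

definition cube_on :: "nat set \<Rightarrow> (nat \<Rightarrow> 'a::comm_ring_1) set" where
  "cube_on K = {v. \<forall>i. v i \<in> {0, 1} \<and> (i \<notin> K \<longrightarrow> v i = 0)}"

lemma cube01_eq_cube_on: "cube01 n = cube_on {..<n}"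
  by (auto simp: cube01_def cube_on_def)

lemma eval_monom_in_Ints:
  assumes "v \<in> cube_on K"
  shows "eval_monom \<sigma> v \<in> \<int>"
proof -
  have "v i = 0 \<or> v i = 1" for i
    using assms by (simp add: cube_on_def)
  then have "v i \<in> \<int>" for i
    by (metis Ints_0 Ints_1)
  then show ?thesis
    unfolding eval_monom_def by (intro Ints_prod Ints_power)
qed

lemma eval_mpoly_eq_sum:
  assumes "finite A" "Poly_Mapping.keys p \<subseteq> A"
  shows "eval_mpoly p v = (\<Sum>\<beta>\<in>A. Poly_Mapping.lookup p \<beta> * eval_monom \<beta> v)"
  unfolding eval_mpoly_def eval_monom_def[symmetric]
  by (rule sum.mono_neutral_left[OF assms]) (simp add: in_keys_iff)

lemma eval_mpoly_diff: "eval_mpoly (p - q) v = eval_mpoly p v - eval_mpoly q v"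
proof -
  let ?A = "Poly_Mapping.keys p \<union> Poly_Mapping.keys q"
  show ?thesis
    using keys_diff[of p q]
    by (simp add: eval_mpoly_eq_sum[of ?A] lookup_minus left_diff_distrib sum_subtractf)
qed

lemma eval_mpoly_single: "eval_mpoly (Poly_Mapping.single \<alpha> 1) v = eval_monom \<alpha> v"
  by (simp add: eval_mpoly_def eval_monom_def)

lemma vanishing_ideal_diff:
  "p \<in> vanishing_ideal n V \<Longrightarrow> q \<in> vanishing_ideal n V \<Longrightarrow> p - q \<in> vanishing_ideal n V"
  using keys_diff[of p q] by (auto simp: vanishing_ideal_def polys_def eval_mpoly_diff)

lemma normal_form_unique:
  assumes diff: "\<And>p q. p \<in> I \<Longrightarrow> q \<in> I \<Longrightarrow> p - q \<in> I"
    and r: "p - r \<in> I" "\<forall>\<beta>\<in>Poly_Mapping.keys r. irreducible_mono n I \<beta>"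
  shows "normal_form n I p = r"
  unfolding normal_form_def
proof (rule the_equality)
  show "p - r \<in> I \<and> (\<forall>\<beta>\<in>Poly_Mapping.keys r. irreducible_mono n I \<beta>)"
    using r by blast
next
  fix r' assume r': "p - r' \<in> I \<and> (\<forall>\<beta>\<in>Poly_Mapping.keys r'. irreducible_mono n I \<beta>)"
  show "r' = r"
  proof (rule ccontr)
    assume "r' \<noteq> r"
    then have nonzero: "r' - r \<noteq> 0"
      by simp
    have "(p - r) - (p - r') \<in> I"
      using diff r r' by blast
    then have "r' - r \<in> I"
      by simp
    moreover have "lead_mono (r' - r) \<in> Poly_Mapping.keys r' \<union> Poly_Mapping.keys r"
      using lead_mono_in_keys[OF nonzero] keys_diff[of r' r] by blast
    ultimately show False
      using nonzero r r' unfolding irreducible_mono_def by blast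
  qed
qed

definition lincomb :: "(nat \<Rightarrow>\<^sub>0 nat) set \<Rightarrow> ((nat \<Rightarrow>\<^sub>0 nat) \<Rightarrow> 'a) \<Rightarrow> (nat \<Rightarrow> 'a) \<Rightarrow> 'a::comm_ring_1"
  where "lincomb S c v = (\<Sum>\<sigma>\<in>S. c \<sigma> * eval_monom \<sigma> v)"

lemma lincomb_zero [simp]: "lincomb S (\<lambda>_. 0) v = 0"
  by (simp add: lincomb_def)

lemma lincomb_in_Ints: "range c \<subseteq> \<int> \<Longrightarrow> v \<in> cube_on K \<Longrightarrow> lincomb S c v \<in> \<int>"
  unfolding lincomb_def by (blast intro: Ints_sum Ints_mult eval_monom_in_Ints)

lemma lincomb_delta:
  assumes "finite S" "\<beta> \<in> S"
  shows "lincomb S (\<lambda>\<sigma>. if \<sigma> = \<beta> then 1 else 0) v = eval_monom \<beta> v"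
proof -
  have "lincomb S (\<lambda>\<sigma>. if \<sigma> = \<beta> then 1 else 0) v = (\<Sum>\<sigma>\<in>S. if \<sigma> = \<beta> then eval_monom \<sigma> v else 0)"
    unfolding lincomb_def by (rule sum.cong) auto
  then show ?thesis
    using assms by simp
qed

definition independent_on :: "(nat \<Rightarrow> 'a::comm_ring_1) set \<Rightarrow> (nat \<Rightarrow>\<^sub>0 nat) set \<Rightarrow> bool" where
  "independent_on V S \<longleftrightarrow> (\<forall>c. (\<forall>v\<in>V. lincomb S c v = 0) \<longrightarrow> (\<forall>\<sigma>\<in>S. c \<sigma> = 0))"

definition int_spans_on :: "(nat \<Rightarrow> 'a::comm_ring_1) set \<Rightarrow> (nat \<Rightarrow>\<^sub>0 nat) set \<Rightarrow> bool" where
  "int_spans_on V S \<longleftrightarrow>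
    (\<forall>g. (\<forall>v\<in>V. g v \<in> \<int>) \<longrightarrow> (\<exists>c. range c \<subseteq> \<int> \<and> (\<forall>v\<in>V. lincomb S c v = g v)))"

definition lex_reduces_on :: "nat set \<Rightarrow> (nat \<Rightarrow> 'a::comm_ring_1) set \<Rightarrow> (nat \<Rightarrow>\<^sub>0 nat) set \<Rightarrow> bool" where
  "lex_reduces_on K V S \<longleftrightarrow> (\<forall>\<mu>. Poly_Mapping.keys \<mu> \<subseteq> K \<longrightarrow> (\<exists>c. range c \<subseteq> \<int> \<and>
    (\<forall>\<sigma>\<in>S. c \<sigma> \<noteq> 0 \<longrightarrow> \<sigma> \<le> \<mu>) \<and> (\<forall>v\<in>V. lincomb S c v = eval_monom \<mu> v)))"

lemma independent_onD: "independent_on V S \<Longrightarrow> \<forall>v\<in>V. lincomb S c v = 0 \<Longrightarrow> \<sigma> \<in> S \<Longrightarrow> c \<sigma> = 0"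
  by (simp add: independent_on_def)

lemma int_spans_onD:
  "int_spans_on V S \<Longrightarrow> \<forall>v\<in>V. g v \<in> \<int> \<Longrightarrow> \<exists>c. range c \<subseteq> \<int> \<and> (\<forall>v\<in>V. lincomb S c v = g v)"
  by (simp add: int_spans_on_def)

lemma lex_reduces_onD:
  "lex_reduces_on K V S \<Longrightarrow> Poly_Mapping.keys \<mu> \<subseteq> K \<Longrightarrow>
    \<exists>c. range c \<subseteq> \<int> \<and> (\<forall>\<sigma>\<in>S. c \<sigma> \<noteq> 0 \<longrightarrow> \<sigma> \<le> \<mu>) \<and> (\<forall>v\<in>V. lincomb S c v = eval_monom \<mu> v)"
  by (simp add: lex_reduces_on_def)

definition int_standard_basis ::
    "nat set \<Rightarrow> (nat \<Rightarrow> 'a::comm_ring_1) set \<Rightarrow> (nat \<Rightarrow>\<^sub>0 nat) set \<Rightarrow> bool" where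
  "int_standard_basis K V S \<longleftrightarrow> finite S \<and> (\<forall>\<sigma>\<in>S. Poly_Mapping.keys \<sigma> \<subseteq> K) \<and>
    independent_on V S \<and> int_spans_on V S \<and> lex_reduces_on K V S"

lemma int_standard_basis_empty_vars:
  assumes "V \<subseteq> cube_on {}"
  shows "int_standard_basis {} V (if V = {} then {} else {0})"
proof (cases "V = {}")
  case True
  then show ?thesis
    by (auto simp: int_standard_basis_def independent_on_def int_spans_on_def lex_reduces_on_def
        intro: exI[of _ "\<lambda>_. 0"])
next
  case False
  have "V \<subseteq> {\<lambda>_. 0}"
    using assms by (auto simp: cube_on_def fun_eq_iff)
  with False have V: "V = {\<lambda>_. 0}"
    by (auto dest: subset_singletonD)
  have lincomb: "lincomb {0} c v = c 0" for c and v :: "nat \<Rightarrow> 'a"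
    by (simp add: lincomb_def)
  have "int_spans_on V {0}"
    unfolding int_spans_on_def V lincomb by (auto intro!: exI[of _ "\<lambda>_. g (\<lambda>_. 0)" for g])
  moreover have "lex_reduces_on {} V {0}"
    unfolding lex_reduces_on_def V lincomb by (auto intro!: exI[of _ "\<lambda>_. 1"])
  ultimately show ?thesis
    using False by (simp add: int_standard_basis_def independent_on_def V lincomb)
qed

definition face0 :: "nat \<Rightarrow> (nat \<Rightarrow> 'a::zero) set \<Rightarrow> (nat \<Rightarrow> 'a) set" where
  "face0 k V = {v \<in> V. v k = 0}"

definition face1 :: "nat \<Rightarrow> (nat \<Rightarrow> 'a::{zero,one}) set \<Rightarrow> (nat \<Rightarrow> 'a) set" where
  "face1 k V = {w. w k = 0 \<and> w(k := 1) \<in> V}"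

lemma faces_cube:
  assumes "V \<subseteq> cube_on (insert k K)"
  shows "face0 k V \<union> face1 k V \<subseteq> cube_on K"
proof
  fix w assume "w \<in> face0 k V \<union> face1 k V"
  then obtain x where "x \<in> V" "w = x(k := 0)"
    by (auto simp: face0_def face1_def) (metis fun_upd_triv fun_upd_upd)+
  then show "w \<in> cube_on K"
    using assms by (auto simp: cube_on_def)
qed

definition times_var :: "nat \<Rightarrow> (nat \<Rightarrow>\<^sub>0 nat) \<Rightarrow> (nat \<Rightarrow>\<^sub>0 nat)" where
  "times_var k \<sigma> = \<sigma> + Poly_Mapping.single k 1"

lemma k_in_keys_times_var: "k \<in> Poly_Mapping.keys (times_var k \<sigma>)"
  by (simp add: times_var_def in_keys_iff lookup_add)

lemma keys_times_var: "Poly_Mapping.keys (times_var k \<sigma>) = insert k (Poly_Mapping.keys \<sigma>)"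
  by (auto simp: times_var_def in_keys_iff lookup_add lookup_single when_def split: if_splits)

lemma inj_times_var: "inj (times_var k)"
  by (rule injI) (simp add: times_var_def)

lemma times_var_mono: "\<sigma> \<le> \<tau> \<Longrightarrow> times_var k \<sigma> \<le> times_var k \<tau>"
  by (simp add: times_var_def add_right_mono)

lemma eval_monom_times_var: "eval_monom (times_var k \<sigma>) v = eval_monom \<sigma> v * v k"
  by (simp add: times_var_def eval_monom_add eval_monom_single)

lemma update_zero_plus_single:
  "Poly_Mapping.update k 0 \<mu> + Poly_Mapping.single k (Poly_Mapping.lookup \<mu> k) = \<mu>"
  by (rule poly_mapping_eqI) (simp add: lookup_add lookup_update lookup_single when_def)

lemma eval_monom_update_zero:
  "eval_monom \<mu> v = eval_monom (Poly_Mapping.update k 0 \<mu>) v * v k ^ Poly_Mapping.lookup \<mu> k"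
  using eval_monom_add[of "Poly_Mapping.update k 0 \<mu>" "Poly_Mapping.single k (Poly_Mapping.lookup \<mu> k)" v]
  by (simp add: update_zero_plus_single eval_monom_single)

lemma times_var_le:
  assumes "\<sigma> \<le> Poly_Mapping.update k 0 \<mu>" "k \<in> Poly_Mapping.keys \<mu>"
  shows "times_var k \<sigma> \<le> \<mu>"
proof -
  have "times_var k \<sigma> \<le> times_var k (Poly_Mapping.update k 0 \<mu>)"
    using assms(1) by (rule times_var_mono)
  also have "\<dots> \<le> Poly_Mapping.update k 0 \<mu> + Poly_Mapping.single k (Poly_Mapping.lookup \<mu> k)"
    unfolding times_var_def using assms(2) by (intro add_left_mono single_le_single) (simp add: in_keys_iff)
  also have "\<dots> = \<mu>"
    by (rule update_zero_plus_single)
  finally show ?thesis .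
qed

locale cube_splitting =
  fixes k :: nat and K :: "nat set" and V :: "(nat \<Rightarrow> 'a::comm_ring_1) set"
    and SA SB :: "(nat \<Rightarrow>\<^sub>0 nat) set"
  assumes k_less: "\<And>i. i \<in> K \<Longrightarrow> k < i"
    and V_cube: "V \<subseteq> cube_on (insert k K)"
    and basis_inter: "int_standard_basis K (face0 k V \<inter> face1 k V) SA"
    and basis_union: "int_standard_basis K (face0 k V \<union> face1 k V) SB"
begin

abbreviation V0 where "V0 \<equiv> face0 k V"
abbreviation V1 where "V1 \<equiv> face1 k V"

definition S :: "(nat \<Rightarrow>\<^sub>0 nat) set" where
  "S = times_var k ` SA \<union> SB"

definition glue :: "((nat \<Rightarrow>\<^sub>0 nat) \<Rightarrow> 'a) \<Rightarrow> ((nat \<Rightarrow>\<^sub>0 nat) \<Rightarrow> 'a) \<Rightarrow> (nat \<Rightarrow>\<^sub>0 nat) \<Rightarrow> 'a" where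
  "glue ca cb \<tau> = (if k \<in> Poly_Mapping.keys \<tau> then ca (\<tau> - Poly_Mapping.single k 1) else cb \<tau>)"

lemma k_notin_K: "k \<notin> K"
  using k_less by blast

lemma
  shows finite_SA: "finite SA" and keys_SA: "\<sigma> \<in> SA \<Longrightarrow> Poly_Mapping.keys \<sigma> \<subseteq> K"
    and independent_SA: "independent_on (V0 \<inter> V1) SA" and spans_SA: "int_spans_on (V0 \<inter> V1) SA"
    and reduces_SA: "lex_reduces_on K (V0 \<inter> V1) SA"
  using basis_inter by (auto simp: int_standard_basis_def)

lemma
  shows finite_SB: "finite SB" and keys_SB: "\<sigma> \<in> SB \<Longrightarrow> Poly_Mapping.keys \<sigma> \<subseteq> K"
    and independent_SB: "independent_on (V0 \<union> V1) SB" and spans_SB: "int_spans_on (V0 \<union> V1) SB"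
    and reduces_SB: "lex_reduces_on K (V0 \<union> V1) SB"
  using basis_union by (auto simp: int_standard_basis_def)

lemma glue_times_var: "glue ca cb (times_var k \<sigma>) = ca \<sigma>"
  unfolding glue_def times_var_def by (simp add: in_keys_iff lookup_add)

lemma glue_SB: "\<sigma> \<in> SB \<Longrightarrow> glue ca cb \<sigma> = cb \<sigma>"
  using keys_SB k_notin_K by (auto simp: glue_def)

lemma glue_in_Ints: "range ca \<subseteq> \<int> \<Longrightarrow> range cb \<subseteq> \<int> \<Longrightarrow> range (glue ca cb) \<subseteq> \<int>"
  by (auto simp: glue_def)

lemma finite_S: "finite S"
  using finite_SA finite_SB by (simp add: S_def)

lemma keys_S: "\<sigma> \<in> S \<Longrightarrow> Poly_Mapping.keys \<sigma> \<subseteq> insert k K"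
  using keys_SA keys_SB unfolding S_def by (fastforce simp: keys_times_var)

lemma lincomb_S:
  "lincomb S c v = v k * lincomb SA (\<lambda>\<sigma>. c (times_var k \<sigma>)) (v(k := 0)) + lincomb SB c (v(k := 0))"
proof -
  have k_SA: "k \<notin> Poly_Mapping.keys \<sigma>" if "\<sigma> \<in> SA" for \<sigma>
    using keys_SA[OF that] k_notin_K by blast
  have k_SB: "k \<notin> Poly_Mapping.keys \<sigma>" if "\<sigma> \<in> SB" for \<sigma>
    using keys_SB[OF that] k_notin_K by blast
  have "times_var k ` SA \<inter> SB = {}"
    using k_SB k_in_keys_times_var by blast
  then have "lincomb S c v = (\<Sum>\<tau>\<in>times_var k ` SA. c \<tau> * eval_monom \<tau> v) + lincomb SB c v"
    using finite_SA finite_SB by (simp add: S_def lincomb_def sum.union_disjoint)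
  also have "(\<Sum>\<tau>\<in>times_var k ` SA. c \<tau> * eval_monom \<tau> v) =
      (\<Sum>\<sigma>\<in>SA. c (times_var k \<sigma>) * (eval_monom \<sigma> v * v k))"
    using inj_on_subset[OF inj_times_var subset_UNIV] by (simp add: sum.reindex eval_monom_times_var)
  also have "\<dots> = v k * lincomb SA (\<lambda>\<sigma>. c (times_var k \<sigma>)) (v(k := 0))"
    unfolding lincomb_def sum_distrib_left using k_SA by (intro sum.cong) (auto simp: eval_monom_upd)
  also have "lincomb SB c v = lincomb SB c (v(k := 0))"
    unfolding lincomb_def using k_SB by (intro sum.cong) (auto simp: eval_monom_upd)
  finally show ?thesis .
qed

lemma lincomb_glue:
  "lincomb S (glue ca cb) v = v k * lincomb SA ca (v(k := 0)) + lincomb SB cb (v(k := 0))"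
  unfolding lincomb_S glue_times_var by (simp add: lincomb_def glue_SB)

lemma cube_point_cases:
  assumes "v \<in> V"
  obtains "v k = 0" "v(k := 0) = v" "v \<in> V0"
    | "v k = 1" "v(k := 0) \<in> V1" "v(k := 0, k := 1) = v"
proof -
  have "v k = 0 \<or> v k = 1"
    using assms V_cube by (auto simp: cube_on_def)
  then show thesis
  proof
    assume "v k = 0"
    then show thesis
      using assms that(1) by (simp add: face0_def fun_upd_idem)
  next
    assume "v k = 1"
    then show thesis
      using assms that(2) by (simp add: face1_def fun_upd_idem)
  qed
qed

lemma faces_k_zero: "w \<in> V0 \<union> V1 \<Longrightarrow> w k = 0"
  by (auto simp: face0_def face1_def)

text \<open>Writing \<open>F = x\<^sub>k A + B\<close> on \<open>V\<close> forces \<open>B = F(\<cdot>, 0)\<close> on \<open>V0\<close> and \<open>A + B = F(\<cdot>, 1)\<close>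
  on \<open>V1\<close>: so \<open>A\<close> is prescribed only on \<open>V0 \<inter> V1\<close>, and then \<open>B\<close> is determined on \<open>V0 \<union> V1\<close>.\<close>
lemma lincomb_glue_eq:
  assumes "v \<in> V"
    and A: "\<forall>w\<in>V0 \<inter> V1. lincomb SA ca w = F (w(k := 1)) - F w"
    and B: "\<forall>w\<in>V0 \<union> V1. lincomb SB cb w = (if w \<in> V0 then F w else F (w(k := 1)) - lincomb SA ca w)"
  shows "lincomb S (glue ca cb) v = F v"
  using assms(1)
proof (cases rule: cube_point_cases)
  case 1
  then show ?thesis using B by (simp add: lincomb_glue)
next
  case 2
  then show ?thesis using A B by (cases "v(k := 0) \<in> V0") (simp_all add: lincomb_glue)
qed

lemma independent_on_S: "independent_on V S"
  unfolding independent_on_def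
proof (intro allI impI)
  fix c assume c: "\<forall>v\<in>V. lincomb S c v = 0"
  define a where "a = lincomb SA (\<lambda>\<sigma>. c (times_var k \<sigma>))"
  define b where "b = lincomb SB c"
  have b_V0: "b w = 0" if "w \<in> V0" for w
    using c that lincomb_S[of c w] by (auto simp: face0_def b_def fun_upd_idem)
  have ab_V1: "a w + b w = 0" if "w \<in> V1" for w
    using c that lincomb_S[of c "w(k := 1)"] by (auto simp: face1_def a_def b_def fun_upd_idem)
  have "\<forall>w\<in>V0 \<inter> V1. a w = 0"
    using b_V0 ab_V1 by fastforce
  then have c_SA: "\<forall>\<sigma>\<in>SA. c (times_var k \<sigma>) = 0"
    using independent_onD[OF independent_SA] unfolding a_def by blast
  then have "\<forall>w\<in>V0 \<union> V1. b w = 0"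
    using b_V0 ab_V1 by (auto simp: a_def lincomb_def)
  then have "\<forall>\<sigma>\<in>SB. c \<sigma> = 0"
    using independent_onD[OF independent_SB] unfolding b_def by blast
  with c_SA show "\<forall>\<sigma>\<in>S. c \<sigma> = 0"
    by (auto simp: S_def)
qed

lemma exists_glue_lincomb_eq:
  assumes ca: "range ca \<subseteq> \<int>" "\<forall>w\<in>V0 \<inter> V1. lincomb SA ca w = F (w(k := 1)) - F w"
    and F: "\<forall>v\<in>V. F v \<in> \<int>"
  obtains cb where "range cb \<subseteq> \<int>" "\<forall>v\<in>V. lincomb S (glue ca cb) v = F v"
proof -
  define h where "h w = (if w \<in> V0 then F w else F (w(k := 1)) - lincomb SA ca w)" for w
  have "\<forall>w\<in>V0 \<union> V1. h w \<in> \<int>"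
    using F ca(1) faces_cube[OF V_cube] by (auto simp: h_def face0_def face1_def intro!: lincomb_in_Ints)
  from int_spans_onD[OF spans_SB this] obtain cb where cb: "range cb \<subseteq> \<int>"
      "\<forall>w\<in>V0 \<union> V1. lincomb SB cb w = h w"
    by blast
  have "\<forall>v\<in>V. lincomb S (glue ca cb) v = F v"
    using lincomb_glue_eq[OF _ ca(2) cb(2)[unfolded h_def]] by blast
  with cb(1) show thesis
    by (rule that)
qed

lemma int_spans_on_S: "int_spans_on V S"
  unfolding int_spans_on_def
proof (intro allI impI)
  fix g :: "(nat \<Rightarrow> 'a) \<Rightarrow> 'a" assume g: "\<forall>v\<in>V. g v \<in> \<int>"
  have "\<forall>w\<in>V0 \<inter> V1. g (w(k := 1)) - g w \<in> \<int>"
    using g by (auto simp: face0_def face1_def)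
  from int_spans_onD[OF spans_SA this] obtain ca where ca: "range ca \<subseteq> \<int>"
      "\<forall>w\<in>V0 \<inter> V1. lincomb SA ca w = g (w(k := 1)) - g w"
    by blast
  obtain cb where "range cb \<subseteq> \<int>" "\<forall>v\<in>V. lincomb S (glue ca cb) v = g v"
    using exists_glue_lincomb_eq[OF ca g] .
  then show "\<exists>c. range c \<subseteq> \<int> \<and> (\<forall>v\<in>V. lincomb S c v = g v)"
    using glue_in_Ints[OF ca(1)] by blast
qed

lemma lex_reduce_monom_without_var:
  assumes "Poly_Mapping.keys \<mu> \<subseteq> K"
  shows "\<exists>c. range c \<subseteq> \<int> \<and> (\<forall>\<sigma>\<in>S. c \<sigma> \<noteq> 0 \<longrightarrow> \<sigma> \<le> \<mu>) \<and> (\<forall>v\<in>V. lincomb S c v = eval_monom \<mu> v)"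
proof -
  obtain cb where cb: "range cb \<subseteq> \<int>" "\<forall>\<sigma>\<in>SB. cb \<sigma> \<noteq> 0 \<longrightarrow> \<sigma> \<le> \<mu>"
      "\<forall>w\<in>V0 \<union> V1. lincomb SB cb w = eval_monom \<mu> w"
    using lex_reduces_onD[OF reduces_SB assms] by blast
  have k: "k \<notin> Poly_Mapping.keys \<mu>"
    using assms k_notin_K by blast
  have A: "\<forall>w\<in>V0 \<inter> V1. lincomb SA (\<lambda>_. 0) w = eval_monom \<mu> (w(k := 1)) - eval_monom \<mu> w"
    by (simp add: eval_monom_upd[OF k])
  have B: "\<forall>w\<in>V0 \<union> V1. lincomb SB cb w =
      (if w \<in> V0 then eval_monom \<mu> w else eval_monom \<mu> (w(k := 1)) - lincomb SA (\<lambda>_. 0) w)"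
    using cb(3) by (simp add: eval_monom_upd[OF k])
  have "lincomb S (glue (\<lambda>_. 0) cb) v = eval_monom \<mu> v" if "v \<in> V" for v
    using lincomb_glue_eq[where F = "eval_monom \<mu>", OF that A B] .
  moreover have "range (glue (\<lambda>_. 0) cb) \<subseteq> \<int>"
    using cb(1) by (intro glue_in_Ints) auto
  moreover have "\<forall>\<sigma>\<in>S. glue (\<lambda>_. 0) cb \<sigma> \<noteq> 0 \<longrightarrow> \<sigma> \<le> \<mu>"
    using cb(2) by (auto simp: S_def glue_times_var glue_SB)
  ultimately show ?thesis
    by blast
qed

text \<open>The one place where \<open>x\<^sub>k\<close> has to be the lex-largest variable.\<close>
lemma SB_less_monom_with_var:
  assumes "\<sigma> \<in> SB" "Poly_Mapping.keys \<mu> \<subseteq> insert k K" "k \<in> Poly_Mapping.keys \<mu>"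
  shows "\<sigma> < \<mu>"
proof (rule less_poly_mappingI[where k = k])
  fix j assume "j < k"
  then have "j \<notin> Poly_Mapping.keys \<sigma>" "j \<notin> Poly_Mapping.keys \<mu>"
    using keys_SB[OF assms(1)] assms(2) k_less by fastforce+
  then show "Poly_Mapping.lookup \<sigma> j = Poly_Mapping.lookup \<mu> j"
    by (simp add: in_keys_iff)
next
  have "k \<notin> Poly_Mapping.keys \<sigma>"
    using keys_SB[OF assms(1)] k_notin_K by blast
  with assms(3) show "Poly_Mapping.lookup \<sigma> k < Poly_Mapping.lookup \<mu> k"
    by (simp add: in_keys_iff)
qed

lemma lex_reduce_monom_with_var:
  assumes \<mu>: "Poly_Mapping.keys \<mu> \<subseteq> insert k K" "k \<in> Poly_Mapping.keys \<mu>"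
  shows "\<exists>c. range c \<subseteq> \<int> \<and> (\<forall>\<sigma>\<in>S. c \<sigma> \<noteq> 0 \<longrightarrow> \<sigma> \<le> \<mu>) \<and> (\<forall>v\<in>V. lincomb S c v = eval_monom \<mu> v)"
proof -
  define \<mu>' where "\<mu>' = Poly_Mapping.update k 0 \<mu>"
  have "Poly_Mapping.keys \<mu>' \<subseteq> K"
    using \<mu>(1) by (auto simp: \<mu>'_def keys_update)
  then obtain ca where ca: "range ca \<subseteq> \<int>" "\<forall>\<sigma>\<in>SA. ca \<sigma> \<noteq> 0 \<longrightarrow> \<sigma> \<le> \<mu>'"
      "\<forall>w\<in>V0 \<inter> V1. lincomb SA ca w = eval_monom \<mu>' w"
    using lex_reduces_onD[OF reduces_SA] by blast
  have "eval_monom \<mu> w = 0" "eval_monom \<mu> (w(k := 1)) = eval_monom \<mu>' w" if "w \<in> V0 \<inter> V1" for w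
    using faces_k_zero[of w] that \<mu>(2)
    by (simp_all add: eval_monom_update_zero[of \<mu> _ k] \<mu>'_def eval_monom_upd keys_update in_keys_iff zero_power)
  then have "\<forall>w\<in>V0 \<inter> V1. lincomb SA ca w = eval_monom \<mu> (w(k := 1)) - eval_monom \<mu> w"
    using ca(3) by simp
  moreover have "\<forall>v\<in>V. eval_monom \<mu> v \<in> \<int>"
    using V_cube eval_monom_in_Ints by blast
  ultimately obtain cb where cb: "range cb \<subseteq> \<int>" "\<forall>v\<in>V. lincomb S (glue ca cb) v = eval_monom \<mu> v"
    using exists_glue_lincomb_eq[OF ca(1)] by blast
  have "\<forall>\<sigma>\<in>S. glue ca cb \<sigma> \<noteq> 0 \<longrightarrow> \<sigma> \<le> \<mu>"
    using ca(2) SB_less_monom_with_var[OF _ \<mu>] times_var_le[OF _ \<mu>(2)]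
    by (auto simp: S_def glue_times_var glue_SB \<mu>'_def less_imp_le)
  with glue_in_Ints[OF ca(1) cb(1)] cb(2) show ?thesis
    by blast
qed

lemma int_standard_basis_S: "int_standard_basis (insert k K) V S"
proof -
  have "lex_reduces_on (insert k K) V S"
    unfolding lex_reduces_on_def
  proof (intro allI impI)
    fix \<mu> :: "nat \<Rightarrow>\<^sub>0 nat" assume \<mu>: "Poly_Mapping.keys \<mu> \<subseteq> insert k K"
    show "\<exists>c. range c \<subseteq> \<int> \<and> (\<forall>\<sigma>\<in>S. c \<sigma> \<noteq> 0 \<longrightarrow> \<sigma> \<le> \<mu>) \<and> (\<forall>v\<in>V. lincomb S c v = eval_monom \<mu> v)"
    proof (cases "k \<in> Poly_Mapping.keys \<mu>")
      case True
      then show ?thesis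
        by (rule lex_reduce_monom_with_var[OF \<mu>])
    next
      case False
      then have "Poly_Mapping.keys \<mu> \<subseteq> K"
        using \<mu> by blast
      then show ?thesis
        by (rule lex_reduce_monom_without_var)
    qed
  qed
  with finite_S keys_S independent_on_S int_spans_on_S show ?thesis
    unfolding int_standard_basis_def by blast
qed

end

lemma int_standard_basis_exists:
  assumes "finite K" "V \<subseteq> cube_on K"
  shows "\<exists>S. int_standard_basis K V S"
  using assms
proof (induction K arbitrary: V rule: finite_linorder_min_induct)
  case empty
  then show ?case
    using int_standard_basis_empty_vars by blast
next
  case (insert k K)
  have "face0 k V \<inter> face1 k V \<subseteq> cube_on K" "face0 k V \<union> face1 k V \<subseteq> cube_on K"
    using faces_cube[OF insert.prems] by blast+
  then obtain SA SB where "int_standard_basis K (face0 k V \<inter> face1 k V) SA"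
      "int_standard_basis K (face0 k V \<union> face1 k V) SB"
    using insert.IH by meson
  then interpret cube_splitting k K V SA SB
    using insert.hyps insert.prems by unfold_locales auto
  show ?case
    using int_standard_basis_S by blast
qed

lemma lex_reduces_on_monom_below:
  assumes "finite S" "lex_reduces_on K V S" "\<beta> \<in> S" "Poly_Mapping.keys \<mu> \<subseteq> K" "\<mu> \<le> \<beta>"
  shows "\<exists>c. c \<beta> = (if \<mu> = \<beta> then 1 else 0) \<and> (\<forall>v\<in>V. lincomb S c v = eval_monom \<mu> v)"
proof (cases "\<mu> = \<beta>")
  case True
  then show ?thesis
    using lincomb_delta[OF assms(1,3)] by (intro exI[of _ "\<lambda>\<sigma>. if \<sigma> = \<beta> then 1 else 0"]) auto
next
  case False
  obtain c where c: "\<forall>\<sigma>\<in>S. c \<sigma> \<noteq> 0 \<longrightarrow> \<sigma> \<le> \<mu>" "\<forall>v\<in>V. lincomb S c v = eval_monom \<mu> v"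
    using lex_reduces_onD[OF assms(2,4)] by blast
  have "c \<beta> = 0"
    using c(1) assms(3,5) False by fastforce
  with False c(2) show ?thesis
    by auto
qed

lemma lex_reduces_on_poly:
  assumes "finite S" "lex_reduces_on K V S" "\<beta> \<in> S"
    and "\<forall>\<mu>\<in>Poly_Mapping.keys q. Poly_Mapping.keys \<mu> \<subseteq> K \<and> \<mu> \<le> \<beta>"
  shows "\<exists>d. d \<beta> = Poly_Mapping.lookup q \<beta> \<and> (\<forall>v\<in>V. lincomb S d v = eval_mpoly q v)"
proof -
  obtain C where C: "\<And>\<mu>. \<mu> \<in> Poly_Mapping.keys q \<Longrightarrow> C \<mu> \<beta> = (if \<mu> = \<beta> then 1 else 0)"
      "\<And>\<mu> v. \<mu> \<in> Poly_Mapping.keys q \<Longrightarrow> v \<in> V \<Longrightarrow> lincomb S (C \<mu>) v = eval_monom \<mu> v"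
    using lex_reduces_on_monom_below[OF assms(1-3)] assms(4) by metis
  define d where "d \<sigma> = (\<Sum>\<mu>\<in>Poly_Mapping.keys q. Poly_Mapping.lookup q \<mu> * C \<mu> \<sigma>)" for \<sigma>
  have "d \<beta> = (\<Sum>\<mu>\<in>Poly_Mapping.keys q. if \<mu> = \<beta> then Poly_Mapping.lookup q \<mu> else 0)"
    unfolding d_def by (rule sum.cong) (simp_all add: C(1))
  also have "\<dots> = Poly_Mapping.lookup q \<beta>"
    by (simp add: in_keys_iff)
  finally have "d \<beta> = Poly_Mapping.lookup q \<beta>" .
  moreover have "lincomb S d v = eval_mpoly q v" if "v \<in> V" for v
  proof -
    have "lincomb S d v = (\<Sum>\<mu>\<in>Poly_Mapping.keys q. Poly_Mapping.lookup q \<mu> * lincomb S (C \<mu>) v)"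
      by (simp add: lincomb_def d_def sum_distrib_left sum_distrib_right sum.swap[of _ S] mult.assoc)
    also have "\<dots> = eval_mpoly q v"
      using C(2) that by (simp add: eval_mpoly_eq_sum[of "Poly_Mapping.keys q"])
    finally show ?thesis .
  qed
  ultimately show ?thesis
    by blast
qed

lemma int_standard_basis_irreducible:
  assumes S: "int_standard_basis {..<n} V S" and "\<beta> \<in> S"
  shows "irreducible_mono n (vanishing_ideal n V) \<beta>"
  unfolding irreducible_mono_def
proof (intro conjI notI)
  show "mono_in n \<beta>"
    using S \<open>\<beta> \<in> S\<close> by (auto simp: int_standard_basis_def mono_in_def)
next
  assume "\<exists>q\<in>vanishing_ideal n V. q \<noteq> 0 \<and> lead_mono q = \<beta>"
  then obtain q where q: "q \<in> vanishing_ideal n V" "q \<noteq> 0" "lead_mono q = \<beta>"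
    by blast
  have "\<forall>\<mu>\<in>Poly_Mapping.keys q. Poly_Mapping.keys \<mu> \<subseteq> {..<n} \<and> \<mu> \<le> \<beta>"
    using q(1,3) le_lead_mono by (auto simp: vanishing_ideal_def polys_def mono_in_def)
  then obtain d where d: "d \<beta> = Poly_Mapping.lookup q \<beta>" "\<forall>v\<in>V. lincomb S d v = eval_mpoly q v"
    using lex_reduces_on_poly[of S "{..<n}" V \<beta> q] S \<open>\<beta> \<in> S\<close> by (auto simp: int_standard_basis_def)
  have "\<forall>v\<in>V. lincomb S d v = 0"
    using d(2) q(1) by (simp add: vanishing_ideal_def)
  then have "Poly_Mapping.lookup q \<beta> = 0"
    using independent_onD[of V S d \<beta>] S \<open>\<beta> \<in> S\<close> d(1) by (simp add: int_standard_basis_def)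
  then show False
    using lead_mono_in_keys[OF q(2)] q(3) by (simp add: in_keys_iff)
qed

lemma int_standard_basis_reduces_monom:
  assumes S: "int_standard_basis {..<n} V S" and "mono_in n \<alpha>"
  obtains r where "Poly_Mapping.single \<alpha> 1 - r \<in> vanishing_ideal n V" "Poly_Mapping.keys r \<subseteq> S"
    "\<forall>\<beta>. Poly_Mapping.lookup r \<beta> \<in> \<int>"
proof -
  have fin: "finite S" and keys_S: "\<forall>\<sigma>\<in>S. mono_in n \<sigma>"
    using S by (auto simp: int_standard_basis_def mono_in_def)
  obtain c where c: "range c \<subseteq> \<int>" "\<forall>v\<in>V. lincomb S c v = eval_monom \<alpha> v"
    using lex_reduces_onD[of "{..<n}" V S \<alpha>] S assms(2)
    by (auto simp: int_standard_basis_def mono_in_def)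
  define r where "r = Abs_poly_mapping (\<lambda>\<sigma>. if \<sigma> \<in> S then c \<sigma> else 0)"
  have "finite {\<sigma>. (if \<sigma> \<in> S then c \<sigma> else 0) \<noteq> 0}"
    by (rule finite_subset[OF _ fin]) (auto split: if_splits)
  then have lookup_r: "Poly_Mapping.lookup r = (\<lambda>\<sigma>. if \<sigma> \<in> S then c \<sigma> else 0)"
    by (simp add: r_def)
  have keys_r: "Poly_Mapping.keys r \<subseteq> S"
    by (auto simp: in_keys_iff lookup_r split: if_splits)
  have "eval_mpoly r v = lincomb S c v" for v
    by (simp add: eval_mpoly_eq_sum[OF fin keys_r] lookup_r lincomb_def)
  then have "\<forall>v\<in>V. eval_mpoly (Poly_Mapping.single \<alpha> 1 - r) v = 0"
    using c(2) by (simp add: eval_mpoly_diff eval_mpoly_single)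
  moreover have "\<forall>\<mu>\<in>Poly_Mapping.keys (Poly_Mapping.single \<alpha> 1 - r). mono_in n \<mu>"
    using keys_diff[of "Poly_Mapping.single \<alpha> 1" r] keys_r keys_S assms(2) by auto
  ultimately have "Poly_Mapping.single \<alpha> 1 - r \<in> vanishing_ideal n V"
    by (simp add: vanishing_ideal_def polys_def)
  moreover have "\<forall>\<beta>. Poly_Mapping.lookup r \<beta> \<in> \<int>"
    using c(1) by (auto simp: lookup_r)
  ultimately show thesis
    using that keys_r by blast
qed

theorem mainTheorem7:
  fixes V :: "(nat \<Rightarrow> 'a::field_char_0) set" and n :: nat and \<alpha> :: "nat \<Rightarrow>\<^sub>0 nat"
  assumes "V \<subseteq> cube01 n"
    and "mono_in n \<alpha>"
  shows "\<forall>\<beta>. Poly_Mapping.lookup (normal_form n (vanishing_ideal n V) (Poly_Mapping.single \<alpha> 1)) \<beta> \<in> \<int>"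
proof -
  obtain S where S: "int_standard_basis {..<n} V S"
    using int_standard_basis_exists[of "{..<n}" V] assms(1) by (auto simp: cube01_eq_cube_on)
  obtain r where r: "Poly_Mapping.single \<alpha> 1 - r \<in> vanishing_ideal n V" "Poly_Mapping.keys r \<subseteq> S"
      "\<forall>\<beta>. Poly_Mapping.lookup r \<beta> \<in> \<int>"
    using int_standard_basis_reduces_monom[OF S assms(2)] .
  have "normal_form n (vanishing_ideal n V) (Poly_Mapping.single \<alpha> 1) = r"
    using vanishing_ideal_diff r(1) int_standard_basis_irreducible[OF S] r(2)
    by (intro normal_form_unique) auto
  with r(3) show ?thesis
    by simp
qed

end
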